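(* Let $A$ be a unital simple projectionless $C^*$-algebra with a unique tracial state $\tau$, and let $\alpha\in\mathrm{Aut}(A)$. Suppose there exists a bounded sequence $(f_n)_{n\in\mathbb{N}}$ of positive elements of $A$ with $\|f_n\|\le1$ which is central (i.e. $\|[f_n,a]\|\to0$ for every $a\in A$) and satisfies $\|\alpha(f_n)f_n\|\to0$ and $\tau(1_A-(f_n+\alpha(f_n)))\to0$ as $n\to\infty$. Then $\alpha\notin\mathrm{WInn}(A)$.
   Context: Let $\pi_\tau$ denote the GNS representation of $A$ associated with $\tau$, and $\pi_\tau(A)''$ its weak closure. $\mathrm{WInn}(A)=\{\alpha\in\mathrm{Aut}(A): \text{there is a unitary } V\in\pi_\tau(A)'' \text{ with } \pi_\tau\circ\alpha=\mathrm{Ad}V\circ\pi_\tau\}$. (In the paper the hypothesis is phrased as: $(f_n)_n$ is a positive contraction in $A_\infty=A^\infty\cap A'$, where $A^\infty=\ell^\infty(\mathbb{N},A)/c_0(A)$, and $(\alpha(f_n))_n\cdot(f_n)_n=0$ in $A^\infty$.) *)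

theory Defs
  imports "HOL-Analysis.Analysis"
begin

text \<open>Unital C*-algebras are modelled on a type 'a of class real_normed_algebra_1 and banach
  (so the norm, ring structure, unit and completeness come from the type), together with a
  complex scalar multiplication scC and an involution st.\<close>

definition unital_cstar_algebra ::
  "(complex \<Rightarrow> 'a::{real_normed_algebra_1,banach} \<Rightarrow> 'a) \<Rightarrow> ('a \<Rightarrow> 'a) \<Rightarrow> bool" where
  "unital_cstar_algebra scC st \<longleftrightarrow>
     (\<forall>a b x. scC (a + b) x = scC a x + scC b x) \<and>
     (\<forall>a x y. scC a (x + y) = scC a x + scC a y) \<and>
     (\<forall>a b x. scC (a * b) x = scC a (scC b x)) \<and>
     (\<forall>x. scC 1 x = x) \<and>
     (\<forall>r x. scC (complex_of_real r) x = scaleR r x) \<and>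
     (\<forall>a x. norm (scC a x) = cmod a * norm x) \<and>
     (\<forall>a x y. scC a (x * y) = scC a x * y \<and> scC a (x * y) = x * scC a y) \<and>
     (\<forall>x y. st (x + y) = st x + st y) \<and>
     (\<forall>a x. st (scC a x) = scC (cnj a) (st x)) \<and>
     (\<forall>x y. st (x * y) = st y * st x) \<and>
     (\<forall>x. st (st x) = x) \<and>
     (\<forall>x. norm (st x * x) = norm x ^ 2)"

definition invertible_el :: "'a::ring_1 \<Rightarrow> bool" where
  "invertible_el x \<longleftrightarrow> (\<exists>y. x * y = 1 \<and> y * x = 1)"

definition spectrum_el :: "(complex \<Rightarrow> 'a::ring_1 \<Rightarrow> 'a) \<Rightarrow> 'a \<Rightarrow> complex set" where
  "spectrum_el scC x = {c. \<not> invertible_el (x - scC c 1)}"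

definition positive_el :: "(complex \<Rightarrow> 'a::ring_1 \<Rightarrow> 'a) \<Rightarrow> ('a \<Rightarrow> 'a) \<Rightarrow> 'a \<Rightarrow> bool" where
  "positive_el scC st x \<longleftrightarrow> st x = x \<and>
     (\<forall>c \<in> spectrum_el scC x. c \<in> \<real> \<and> Re c \<ge> 0)"

definition closed_ideal :: "(complex \<Rightarrow> 'a::{real_normed_algebra_1} \<Rightarrow> 'a) \<Rightarrow> 'a set \<Rightarrow> bool" where
  "closed_ideal scC I \<longleftrightarrow> closed I \<and> 0 \<in> I \<and>
     (\<forall>x\<in>I. \<forall>y\<in>I. x + y \<in> I) \<and> (\<forall>c. \<forall>x\<in>I. scC c x \<in> I) \<and>
     (\<forall>x\<in>I. \<forall>a. a * x \<in> I \<and> x * a \<in> I)"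

definition simple_algebra :: "(complex \<Rightarrow> 'a::{real_normed_algebra_1} \<Rightarrow> 'a) \<Rightarrow> bool" where
  "simple_algebra scC \<longleftrightarrow> (\<forall>I. closed_ideal scC I \<longrightarrow> I = {0} \<or> I = UNIV)"

definition projectionless :: "('a::ring_1 \<Rightarrow> 'a) \<Rightarrow> bool" where
  "projectionless st \<longleftrightarrow> (\<forall>p. st p = p \<and> p * p = p \<longrightarrow> p = 0 \<or> p = 1)"

definition tracial_state ::
  "(complex \<Rightarrow> 'a::ring_1 \<Rightarrow> 'a) \<Rightarrow> ('a \<Rightarrow> 'a) \<Rightarrow> ('a \<Rightarrow> complex) \<Rightarrow> bool" where
  "tracial_state scC st \<phi> \<longleftrightarrow>
     (\<forall>x y. \<phi> (x + y) = \<phi> x + \<phi> y) \<and> (\<forall>c x. \<phi> (scC c x) = c * \<phi> x) \<and>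
     (\<forall>x. positive_el scC st x \<longrightarrow> \<phi> x \<in> \<real> \<and> Re (\<phi> x) \<ge> 0) \<and>
     \<phi> 1 = 1 \<and> (\<forall>x y. \<phi> (x * y) = \<phi> (y * x))"

definition unique_tracial_state ::
  "(complex \<Rightarrow> 'a::ring_1 \<Rightarrow> 'a) \<Rightarrow> ('a \<Rightarrow> 'a) \<Rightarrow> ('a \<Rightarrow> complex) \<Rightarrow> bool" where
  "unique_tracial_state scC st \<tau> \<longleftrightarrow> tracial_state scC st \<tau> \<and>
     (\<forall>\<sigma>. tracial_state scC st \<sigma> \<longrightarrow> \<sigma> = \<tau>)"

definition star_automorphism ::
  "(complex \<Rightarrow> 'a::ring_1 \<Rightarrow> 'a) \<Rightarrow> ('a \<Rightarrow> 'a) \<Rightarrow> ('a \<Rightarrow> 'a) \<Rightarrow> bool" where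
  "star_automorphism scC st \<alpha> \<longleftrightarrow> bij \<alpha> \<and>
     (\<forall>x y. \<alpha> (x + y) = \<alpha> x + \<alpha> y) \<and> (\<forall>c x. \<alpha> (scC c x) = scC c (\<alpha> x)) \<and>
     (\<forall>x y. \<alpha> (x * y) = \<alpha> x * \<alpha> y) \<and> (\<forall>x. \<alpha> (st x) = st (\<alpha> x))"

text \<open>Complex Hilbert spaces on a Banach type 'h with complex scalar multiplication hsc and
  inner product hin (linear in the second, conjugate-linear in the first argument),
  whose norm is the type's norm.\<close>
definition complex_hilbert ::
  "(complex \<Rightarrow> 'h::banach \<Rightarrow> 'h) \<Rightarrow> ('h \<Rightarrow> 'h \<Rightarrow> complex) \<Rightarrow> bool" where
  "complex_hilbert hsc hin \<longleftrightarrow>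
     (\<forall>a b x. hsc (a + b) x = hsc a x + hsc b x) \<and>
     (\<forall>a x y. hsc a (x + y) = hsc a x + hsc a y) \<and>
     (\<forall>a b x. hsc (a * b) x = hsc a (hsc b x)) \<and>
     (\<forall>x. hsc 1 x = x) \<and>
     (\<forall>r x. hsc (complex_of_real r) x = scaleR r x) \<and>
     (\<forall>x y z. hin x (y + z) = hin x y + hin x z) \<and>
     (\<forall>c x y. hin x (hsc c y) = c * hin x y) \<and>
     (\<forall>x y. hin y x = cnj (hin x y)) \<and>
     (\<forall>x. hin x x \<in> \<real> \<and> Re (hin x x) \<ge> 0 \<and> norm x = sqrt (Re (hin x x)))"

definition bounded_clinear_op :: "(complex \<Rightarrow> 'h::real_normed_vector \<Rightarrow> 'h) \<Rightarrow> ('h \<Rightarrow> 'h) \<Rightarrow> bool" where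
  "bounded_clinear_op hsc T \<longleftrightarrow> (\<forall>x y. T (x + y) = T x + T y) \<and>
     (\<forall>c x. T (hsc c x) = hsc c (T x)) \<and> (\<exists>K. \<forall>x. norm (T x) \<le> K * norm x)"

definition commutant :: "(complex \<Rightarrow> 'h::real_normed_vector \<Rightarrow> 'h) \<Rightarrow> ('h \<Rightarrow> 'h) set \<Rightarrow> ('h \<Rightarrow> 'h) set" where
  "commutant hsc S = {T. bounded_clinear_op hsc T \<and> (\<forall>s\<in>S. T \<circ> s = s \<circ> T)}"

definition unitary_op ::
  "(complex \<Rightarrow> 'h::real_normed_vector \<Rightarrow> 'h) \<Rightarrow> ('h \<Rightarrow> 'h \<Rightarrow> complex) \<Rightarrow> ('h \<Rightarrow> 'h) \<Rightarrow> bool" where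
  "unitary_op hsc hin V \<longleftrightarrow> bounded_clinear_op hsc V \<and> surj V \<and> (\<forall>x y. hin (V x) (V y) = hin x y)"

definition star_representation ::
  "(complex \<Rightarrow> 'a::ring_1 \<Rightarrow> 'a) \<Rightarrow> ('a \<Rightarrow> 'a) \<Rightarrow> (complex \<Rightarrow> 'h::banach \<Rightarrow> 'h) \<Rightarrow>
   ('h \<Rightarrow> 'h \<Rightarrow> complex) \<Rightarrow> ('a \<Rightarrow> 'h \<Rightarrow> 'h) \<Rightarrow> bool" where
  "star_representation scC st hsc hin \<pi> \<longleftrightarrow>
     (\<forall>a. bounded_clinear_op hsc (\<pi> a)) \<and>
     (\<forall>x y. \<pi> (x + y) = (\<lambda>v. \<pi> x v + \<pi> y v)) \<and>
     (\<forall>c x. \<pi> (scC c x) = (\<lambda>v. hsc c (\<pi> x v))) \<and>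
     (\<forall>x y. \<pi> (x * y) = \<pi> x \<circ> \<pi> y) \<and> \<pi> 1 = id \<and>
     (\<forall>x u v. hin (\<pi> (st x) u) v = hin u (\<pi> x v))"

text \<open>GNS representation of A associated with the state \<tau>: a cyclic *-representation
  (\<pi>, \<xi>) with \<tau>(a) = <\<xi>, \<pi>(a) \<xi>>. (Unique up to unitary equivalence.)\<close>
definition gns_representation ::
  "(complex \<Rightarrow> 'a::ring_1 \<Rightarrow> 'a) \<Rightarrow> ('a \<Rightarrow> 'a) \<Rightarrow> ('a \<Rightarrow> complex) \<Rightarrow>
   (complex \<Rightarrow> 'h::banach \<Rightarrow> 'h) \<Rightarrow> ('h \<Rightarrow> 'h \<Rightarrow> complex) \<Rightarrow> ('a \<Rightarrow> 'h \<Rightarrow> 'h) \<Rightarrow> 'h \<Rightarrow> bool" where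
  "gns_representation scC st \<tau> hsc hin \<pi> \<xi> \<longleftrightarrow>
     complex_hilbert hsc hin \<and> star_representation scC st hsc hin \<pi> \<and>
     closure (range (\<lambda>a. \<pi> a \<xi>)) = UNIV \<and> (\<forall>a. \<tau> a = hin \<xi> (\<pi> a \<xi>))"

definition WInn ::
  "(complex \<Rightarrow> 'a::ring_1 \<Rightarrow> 'a) \<Rightarrow> ('a \<Rightarrow> 'a) \<Rightarrow>
   (complex \<Rightarrow> 'h::real_normed_vector \<Rightarrow> 'h) \<Rightarrow> ('h \<Rightarrow> 'h \<Rightarrow> complex) \<Rightarrow> ('a \<Rightarrow> 'h \<Rightarrow> 'h) \<Rightarrow>
   ('a \<Rightarrow> 'a) set" where
  "WInn scC st hsc hin \<pi> = {\<alpha>. star_automorphism scC st \<alpha> \<and>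
     (\<exists>V. unitary_op hsc hin V \<and> V \<in> commutant hsc (commutant hsc (range \<pi>)) \<and>
          (\<forall>a. \<pi> (\<alpha> a) = V \<circ> \<pi> a \<circ> inv V))}"

end

theory Submission
  imports Defs "HOL-Computational_Algebra.Formal_Power_Series"
begin

text \<open>
  Suppose \<open>\<alpha> = Ad V\<close> on the GNS space of \<open>\<tau>\<close> with \<open>V \<in> \<pi>(A)''\<close>. Because \<open>\<tau>\<close> is a trace,
  right multiplication \<open>\<pi>(a)\<xi> \<mapsto> \<pi>(ab)\<xi>\<close> extends to a bounded operator \<open>\<rho>(b) \<in> \<pi>(A)'\<close>, which
  therefore commutes with \<open>V\<close>. For \<open>\<eta> = V\<^sup>-\<^sup>1\<xi>\<close> this gives \<open>\<pi>(f\<^sub>n)\<xi> = V\<rho>(f\<^sub>n)\<eta>\<close> and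
  \<open>\<pi>(\<alpha>(f\<^sub>n))\<xi> = V\<pi>(f\<^sub>n)\<eta>\<close>. These vectors are asymptotically equal, because \<open>f\<^sub>n\<close> is central,
  and asymptotically orthogonal, because \<open>\<langle>\<pi>(\<alpha>(f\<^sub>n))\<xi>, \<pi>(f\<^sub>n)\<xi>\<rangle> = \<tau>(\<alpha>(f\<^sub>n)f\<^sub>n) \<rightarrow> 0\<close>;
  so both tend to \<open>0\<close>, whence \<open>\<tau>(f\<^sub>n) + \<tau>(\<alpha>(f\<^sub>n)) \<rightarrow> 0\<close>, contradicting
  \<open>\<tau>(1 - f\<^sub>n - \<alpha>(f\<^sub>n)) \<rightarrow> 0\<close>.
\<close>

lemma closed_Collect_dense:
  fixes X :: "'a::topological_space set"
  assumes "closed {x. P x}" and "closure X = UNIV" and "\<And>x. x \<in> X \<Longrightarrow> P x"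
  shows "P y"
proof -
  have "closure X \<subseteq> {x. P x}"
    using assms(1,3) by (intro closure_minimal) auto
  then show ?thesis
    using assms(2) by auto
qed

lemma le_mult_of_forall_gt:
  fixes a b c :: real
  assumes "\<And>t. a < t \<Longrightarrow> b \<le> t * c" and "0 \<le> c"
  shows "b \<le> a * c"
proof (cases "c = 0")
  case True
  then show ?thesis using assms(1)[of "a + 1"] by simp
next
  case False
  with assms(2) have "c > 0" by simp
  have "b / c \<le> a"
  proof (rule dense_ge)
    fix t assume "a < t"
    then show "b / c \<le> t" using assms(1) \<open>c > 0\<close> by (simp add: divide_simps)
  qed
  then show ?thesis using \<open>c > 0\<close> by (simp add: divide_simps)
qed

lemma tendsto_zero_on_dense:
  fixes D :: "nat \<Rightarrow> 'a::real_normed_vector \<Rightarrow> 'b::real_normed_vector"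
  assumes linear: "\<And>n. linear (D n)"
    and bounded: "\<And>n z. norm (D n z) \<le> K * norm z"
    and dense: "closure X = UNIV"
    and tendsto: "\<And>x. x \<in> X \<Longrightarrow> (\<lambda>n. D n x) \<longlonglongrightarrow> 0"
  shows "(\<lambda>n. D n y) \<longlonglongrightarrow> 0"
proof (rule LIMSEQ_I)
  fix r :: real
  assume "r > 0"
  define K' where "K' = \<bar>K\<bar> + 1"
  have "K' > 0" by (simp add: K'_def)
  with \<open>r > 0\<close> dense obtain x where "x \<in> X" and close: "dist x y < r / (2 * K')"
    by (metis closure_approachable UNIV_I divide_pos_pos mult_pos_pos zero_less_numeral)
  with tendsto obtain N where N: "\<And>n. n \<ge> N \<Longrightarrow> norm (D n x) < r / 2"
    using \<open>r > 0\<close> by (metis LIMSEQ_D diff_zero half_gt_zero)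
  have "norm (D n y) < r" if "n \<ge> N" for n
  proof -
    have "norm (D n y) \<le> norm (D n x) + norm (D n (y - x))"
      using linear_diff[OF linear, of n y x] norm_triangle_ineq[of "D n x" "D n y - D n x"]
      by simp
    also have "norm (D n (y - x)) \<le> K' * norm (y - x)"
      using bounded[of n "y - x"] by (simp add: K'_def) (smt (verit) mult_right_mono norm_ge_zero)
    also have "K' * norm (y - x) < r / 2"
      using close \<open>K' > 0\<close> by (simp add: dist_norm norm_minus_commute field_simps)
    finally show ?thesis using N[OF that] by simp
  qed
  then show "\<exists>N. \<forall>n\<ge>N. norm (D n y - 0) < r" by auto
qed

section \<open>The binomial series of \<open>\<surd>(1 - h)\<close>\<close>

definition sqrt_one_minus_coeff :: "nat \<Rightarrow> real" where
  "sqrt_one_minus_coeff k = (-1) ^ k * ((1/2) gchoose k)"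

lemma abs_half_gchoose_le_1: "\<bar>(1/2::real) gchoose k\<bar> \<le> 1"
proof (induction k)
  case (Suc k)
  have "fact (Suc k) * ((1/2::real) gchoose Suc k) = (\<Prod>i = 0..<Suc k. 1/2 - of_nat i)"
    by (rule gbinomial_mult_fact)
  also have "\<dots> = fact k * ((1/2) gchoose k) * (1/2 - of_nat k)"
    by (simp add: gbinomial_mult_fact)
  finally have "fact k * (real (Suc k) * ((1/2::real) gchoose Suc k)) =
      fact k * (((1/2) gchoose k) * (1/2 - of_nat k))"
    by (simp only: fact_Suc mult.assoc mult.left_commute[of "real (Suc k)"])
  then have "real (Suc k) * ((1/2::real) gchoose Suc k) = ((1/2) gchoose k) * (1/2 - of_nat k)"
    by simp
  then have "(1/2::real) gchoose Suc k = ((1/2) gchoose k) * ((1/2 - of_nat k) / of_nat (Suc k))"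
    by (simp add: field_simps del: of_nat_Suc)
  moreover have "\<bar>(1/2 - real k) / real (Suc k)\<bar> \<le> 1"
    by (auto simp: divide_simps abs_le_iff)
  ultimately show ?case
    using Suc by (metis abs_ge_zero abs_mult mult_le_one)
qed simp

lemma abs_sqrt_one_minus_coeff_le_1: "\<bar>sqrt_one_minus_coeff k\<bar> \<le> 1"
  using abs_half_gchoose_le_1[of k] by (simp add: sqrt_one_minus_coeff_def abs_mult)

text \<open>Vandermonde's identity for \<open>1/2 + 1/2 = 1\<close>.\<close>
lemma sqrt_one_minus_coeff_convolution:
  "(\<Sum>i\<le>n. sqrt_one_minus_coeff i * sqrt_one_minus_coeff (n - i)) =
     (if n = 0 then 1 else if n = 1 then -1 else 0)"
proof -
  have "(\<Sum>i\<le>n. sqrt_one_minus_coeff i * sqrt_one_minus_coeff (n - i)) =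
      (-1) ^ n * (\<Sum>i\<in>{0..n}. ((1/2::real) gchoose i) * ((1/2) gchoose (n - i)))"
    unfolding sqrt_one_minus_coeff_def sum_distrib_left atMost_atLeast0
    by (rule sum.cong) (auto simp: power_add[symmetric])
  also have "\<dots> = (-1) ^ n * ((1::real) gchoose n)"
    by (simp add: gbinomial_Vandermonde)
  also have "(1::real) gchoose n = of_nat (1 choose n)"
    by (metis binomial_gbinomial of_nat_1)
  finally show ?thesis by (cases n) (auto simp: binomial_eq_0)
qed

lemma sqrt_one_minus_series:
  fixes h :: "'a::{real_normed_algebra_1,banach}"
  assumes "norm h < 1"
  defines "a \<equiv> \<lambda>k. sqrt_one_minus_coeff k *\<^sub>R h ^ k"
  shows "summable a" and "suminf a * suminf a = 1 - h"
proof -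
  have bound: "norm (a k) \<le> norm h ^ k" for k
    using abs_sqrt_one_minus_coeff_le_1[of k] norm_power_ineq[of h k]
    by (simp add: a_def) (metis abs_ge_zero mult_left_le_one_le norm_ge_zero order_trans)
  have "summable (\<lambda>k. norm h ^ k)"
    using assms(1) by (simp add: summable_geometric)
  then have norm_summable: "summable (\<lambda>k. norm (a k))"
    by (rule summable_comparison_test'[where N=0]) (simp add: bound)
  then show "summable a"
    by (rule summable_norm_cancel)
  have "(\<Sum>i\<le>k. a i * a (k - i)) = (if k = 0 then 1 else if k = 1 then - h else 0)" for k
  proof -
    have "(\<Sum>i\<le>k. a i * a (k - i)) =
        (\<Sum>i\<le>k. sqrt_one_minus_coeff i * sqrt_one_minus_coeff (k - i)) *\<^sub>R h ^ k"
      unfolding scaleR_sum_left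
      by (rule sum.cong) (auto simp: a_def power_add[symmetric])
    then show ?thesis by (simp add: sqrt_one_minus_coeff_convolution)
  qed
  moreover have "(\<lambda>k. if k = 0 then 1 else if k = 1 then - h else 0) sums (1 - h)"
    using sums_finite[of "{0, 1}" "\<lambda>k. if k = 0 then 1 else if k = 1 then - h else 0"] by simp
  ultimately have "(\<lambda>k. \<Sum>i\<le>k. a i * a (k - i)) sums (1 - h)"
    by simp
  with Cauchy_product_sums[OF norm_summable norm_summable]
  show "suminf a * suminf a = 1 - h"
    using sums_unique2 by blast
qed

section \<open>C*-algebras\<close>

locale cstar_algebra =
  fixes scC :: "complex \<Rightarrow> 'a::{real_normed_algebra_1,banach} \<Rightarrow> 'a" and st :: "'a \<Rightarrow> 'a"
  assumes unital_cstar_algebra: "unital_cstar_algebra scC st"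
begin

lemma st_add: "st (x + y) = st x + st y"
  using unital_cstar_algebra unfolding unital_cstar_algebra_def by blast

lemma st_mult: "st (x * y) = st y * st x"
  using unital_cstar_algebra unfolding unital_cstar_algebra_def by blast

lemma st_st [simp]: "st (st x) = x"
  using unital_cstar_algebra unfolding unital_cstar_algebra_def by blast

lemma norm_st_mult_self: "norm (st x * x) = norm x ^ 2"
  using unital_cstar_algebra unfolding unital_cstar_algebra_def by blast

lemma scC_of_real: "scC (complex_of_real r) x = r *\<^sub>R x"
  using unital_cstar_algebra unfolding unital_cstar_algebra_def by blast

lemma scC_mult_left: "scC c x * y = scC c (x * y)"
  using unital_cstar_algebra unfolding unital_cstar_algebra_def by metis

lemma st_scaleR: "st (r *\<^sub>R x) = r *\<^sub>R st x"
  using unital_cstar_algebra unfolding unital_cstar_algebra_def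
  by (metis scC_of_real complex_cnj_complex_of_real)

lemma st_one: "st 1 = 1"
  using st_mult[of 1 "st 1"] by simp

lemma st_power: "st (x ^ k) = st x ^ k"
  by (induction k) (simp_all add: st_one st_mult power_commutes)

lemma norm_st: "norm (st x) = norm x"
proof -
  have "norm x \<le> norm (st x)" for x
  proof (cases "x = 0")
    case False
    have "norm x ^ 2 \<le> norm (st x) * norm x"
      using norm_st_mult_self[of x] norm_mult_ineq[of "st x" x] by simp
    with False show ?thesis by (simp add: power2_eq_square)
  qed simp
  from this[of x] this[of "st x"] show ?thesis by simp
qed

lemma bounded_linear_st: "bounded_linear st"
  by (rule bounded_linear_intro[of _ 1]) (simp_all add: st_add st_scaleR norm_st)

lemma selfadjoint_sqrt_one_minus:
  assumes "st h = h" and "norm h < 1"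
  shows "\<exists>s. st s = s \<and> s * s = 1 - h"
proof -
  define a where "a k = sqrt_one_minus_coeff k *\<^sub>R h ^ k" for k
  have sums: "a sums suminf a" and square: "suminf a * suminf a = 1 - h"
    using sqrt_one_minus_series[OF assms(2)] unfolding a_def by (simp_all add: summable_sums)
  have "(\<lambda>k. st (a k)) sums st (suminf a)"
    by (rule bounded_linear.sums[OF bounded_linear_st sums])
  moreover have "st (a k) = a k" for k
    by (simp add: a_def st_scaleR st_power assms(1))
  ultimately have "st (suminf a) = suminf a"
    using sums sums_unique2 by auto
  with square show ?thesis by blast
qed

end

section \<open>Hilbert spaces\<close>

locale hilbert_space =
  fixes hsc :: "complex \<Rightarrow> 'h::banach \<Rightarrow> 'h" and hin :: "'h \<Rightarrow> 'h \<Rightarrow> complex"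
  assumes complex_hilbert: "complex_hilbert hsc hin"
begin

lemma hin_add_right: "hin x (y + z) = hin x y + hin x z"
  using complex_hilbert unfolding complex_hilbert_def by blast

lemma hin_scale_right: "hin x (hsc c y) = c * hin x y"
  using complex_hilbert unfolding complex_hilbert_def by blast

lemma hin_commute: "hin y x = cnj (hin x y)"
  using complex_hilbert unfolding complex_hilbert_def by blast

lemma hsc_of_real: "hsc (complex_of_real r) x = r *\<^sub>R x"
  using complex_hilbert unfolding complex_hilbert_def by blast

lemma hin_self: "hin x x = complex_of_real (norm x ^ 2)"
proof -
  have "hin x x \<in> \<real>" and "norm x = sqrt (Re (hin x x))" and "Re (hin x x) \<ge> 0"
    using complex_hilbert unfolding complex_hilbert_def by blast+
  then show ?thesis by (metis Re_complex_of_real Reals_cases real_sqrt_pow2)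
qed

lemma norm_power2_eq_hin: "norm x ^ 2 = Re (hin x x)"
  by (simp add: hin_self)

lemma hin_add_left: "hin (y + z) x = hin y x + hin z x"
  by (metis complex_cnj_add hin_add_right hin_commute)

lemma hin_scale_left: "hin (hsc c y) x = cnj c * hin y x"
  by (metis complex_cnj_mult hin_scale_right hin_commute)

lemma hin_diff_right: "hin x (y - z) = hin x y - hin x z"
  using hin_add_right[of x "y - z" z] by (simp add: eq_diff_eq)

lemma hin_diff_left: "hin (y - z) x = hin y x - hin z x"
  using hin_add_left[of "y - z" z x] by (simp add: eq_diff_eq)

lemma hin_scaleR_right: "hin x (r *\<^sub>R y) = complex_of_real r * hin x y"
  by (metis hsc_of_real hin_scale_right)

lemma norm_hsc: "norm (hsc c x) = cmod c * norm x"
proof -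
  have "norm (hsc c x) ^ 2 = Re (c * (cnj c * hin x x))"
    by (simp only: norm_power2_eq_hin hin_scale_left hin_scale_right)
  also have "c * (cnj c * hin x x) = complex_of_real (cmod c ^ 2) * complex_of_real (norm x ^ 2)"
    by (simp only: mult.assoc[symmetric] hin_self complex_norm_square[symmetric])
  also have "Re \<dots> = (cmod c * norm x) ^ 2"
    by (simp add: power_mult_distrib)
  finally show ?thesis by (simp add: power2_eq_iff_nonneg)
qed

lemma Re_hin_le: "Re (hin x y) \<le> norm x * norm y"
proof -
  have "norm (x + y) ^ 2 = norm x ^ 2 + norm y ^ 2 + 2 * Re (hin x y)"
    by (simp add: norm_power2_eq_hin hin_add_left hin_add_right hin_commute[of y x])
  moreover have "norm (x + y) ^ 2 \<le> (norm x + norm y) ^ 2"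
    by (rule power_mono[OF norm_triangle_ineq]) simp
  ultimately show ?thesis by (simp add: power2_sum)
qed

text \<open>Cauchy--Schwarz: rotate \<open>y\<close> by a phase that makes \<open>hin x y\<close> real and nonnegative.\<close>
lemma norm_hin_le: "cmod (hin x y) \<le> norm x * norm y"
proof (cases "hin x y = 0")
  case False
  define \<theta> where "\<theta> = cnj (hin x y) / cmod (hin x y)"
  have "hin x (hsc \<theta> y) = complex_of_real (cmod (hin x y))"
    using False by (simp add: hin_scale_right \<theta>_def mult.commute[of _ "hin x y"]
      flip: complex_norm_square) (simp add: power2_eq_square)
  then have "cmod (hin x y) = Re (hin x (hsc \<theta> y))" by simp
  also have "\<dots> \<le> norm x * norm (hsc \<theta> y)" by (rule Re_hin_le)
  also have "\<dots> = norm x * norm y" using False by (simp add: norm_hsc \<theta>_def norm_divide)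
  finally show ?thesis .
qed simp

lemma bounded_clinear_op_bounded_linear:
  assumes "bounded_clinear_op hsc T"
  shows "bounded_linear T"
proof -
  obtain K where "\<And>x. norm (T x) \<le> K * norm x" "\<And>x y. T (x + y) = T x + T y"
    "\<And>c x. T (hsc c x) = hsc c (T x)"
    using assms unfolding bounded_clinear_op_def by blast
  then show ?thesis
    by (intro bounded_linear_intro[of _ K]) (simp_all add: mult.commute flip: hsc_of_real)
qed

lemma bounded_clinear_op_hsc: "bounded_clinear_op hsc (hsc c)"
  unfolding bounded_clinear_op_def
proof (intro conjI allI exI)
  show "hsc c (x + y) = hsc c x + hsc c y" for x y
    using complex_hilbert unfolding complex_hilbert_def by blast
  show "hsc c (hsc d x) = hsc d (hsc c x)" for d x
    using complex_hilbert unfolding complex_hilbert_def by (metis mult.commute)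
  show "norm (hsc c x) \<le> cmod c * norm x" for x
    by (simp add: norm_hsc)
qed

lemma unitary_op_norm: "unitary_op hsc hin V \<Longrightarrow> norm (V x) = norm x"
  unfolding unitary_op_def by (metis norm_power2_eq_hin norm_ge_zero power2_eq_iff_nonneg)

text \<open>Use \<open>\<parallel>u\<^sub>n\<parallel>\<^sup>2 = \<langle>u\<^sub>n - v\<^sub>n, u\<^sub>n\<rangle> + \<langle>v\<^sub>n, u\<^sub>n\<rangle>\<close>.\<close>
lemma tendsto_zero_of_asymptotically_orthogonal:
  assumes bounded: "\<And>n. norm (u n) \<le> 1"
    and close: "(\<lambda>n. u n - v n) \<longlonglongrightarrow> 0"
    and orthogonal: "(\<lambda>n. hin (v n) (u n)) \<longlonglongrightarrow> 0"
  shows "u \<longlonglongrightarrow> 0" and "v \<longlonglongrightarrow> 0"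
proof -
  define g where "g = (\<lambda>n. norm (u n - v n) + cmod (hin (v n) (u n)))"
  have bound: "norm (u n) ^ 2 \<le> g n" for n
  proof -
    have "norm (u n) ^ 2 = Re (hin (u n - v n) (u n)) + Re (hin (v n) (u n))"
      by (simp add: norm_power2_eq_hin hin_diff_left)
    also have "Re (hin (u n - v n) (u n)) \<le> norm (u n - v n)"
      using Re_hin_le[of "u n - v n" "u n"] bounded[of n]
      by (meson mult_left_le norm_ge_zero order_trans)
    finally show ?thesis
      using complex_Re_le_cmod[of "hin (v n) (u n)"] by (simp add: g_def)
  qed
  have "g \<longlonglongrightarrow> 0"
    unfolding g_def by (intro tendsto_add_zero tendsto_norm_zero close orthogonal)
  then have "(\<lambda>n. norm (u n) ^ 2) \<longlonglongrightarrow> 0"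
    by (rule Lim_null_comparison[rotated]) (simp add: bound)
  then have "(\<lambda>n. sqrt (norm (u n) ^ 2)) \<longlonglongrightarrow> 0"
    using tendsto_real_sqrt by fastforce
  then show "u \<longlonglongrightarrow> 0"
    by (simp add: tendsto_norm_zero_iff)
  with close show "v \<longlonglongrightarrow> 0"
    using tendsto_diff by fastforce
qed

end

section \<open>Representations\<close>

locale cstar_representation = cstar_algebra scC st + hilbert_space hsc hin
  for scC :: "complex \<Rightarrow> 'a::{real_normed_algebra_1,banach} \<Rightarrow> 'a" and st :: "'a \<Rightarrow> 'a"
    and hsc :: "complex \<Rightarrow> 'h::banach \<Rightarrow> 'h" and hin :: "'h \<Rightarrow> 'h \<Rightarrow> complex" +
  fixes \<pi> :: "'a \<Rightarrow> 'h \<Rightarrow> 'h"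
  assumes star_representation: "star_representation scC st hsc hin \<pi>"
begin

lemma bounded_clinear_op_pi: "bounded_clinear_op hsc (\<pi> a)"
  using star_representation unfolding star_representation_def by blast

lemma bounded_linear_pi: "bounded_linear (\<pi> a)"
  by (rule bounded_clinear_op_bounded_linear[OF bounded_clinear_op_pi])

lemma pi_add: "\<pi> (x + y) v = \<pi> x v + \<pi> y v"
  using star_representation unfolding star_representation_def by metis

lemma pi_scC: "\<pi> (scC c x) v = hsc c (\<pi> x v)"
  using star_representation unfolding star_representation_def by metis

lemma pi_mult: "\<pi> (x * y) v = \<pi> x (\<pi> y v)"
  using star_representation unfolding star_representation_def by (metis comp_apply)

lemma pi_one: "\<pi> 1 v = v"
  using star_representation unfolding star_representation_def by (metis id_apply)

lemma pi_adjoint: "hin (\<pi> (st x) u) v = hin u (\<pi> x v)"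
  using star_representation unfolding star_representation_def by blast

lemma pi_scaleR: "\<pi> (r *\<^sub>R x) v = r *\<^sub>R \<pi> x v"
  by (metis pi_scC scC_of_real hsc_of_real)

lemma pi_diff: "\<pi> (x - y) v = \<pi> x v - \<pi> y v"
  using pi_add[of "x - y" y v] by (simp add: eq_diff_eq)

lemma norm_power2_pi: "norm (\<pi> x w) ^ 2 = Re (hin w (\<pi> (st x * x) w))"
  by (metis norm_power2_eq_hin pi_adjoint pi_mult st_st)

text \<open>For \<open>t > \<parallel>x\<parallel>\<close>, applying \<open>\<pi>\<close> to a self-adjoint square root \<open>s\<close> of \<open>1 - x\<^sup>*x / t\<^sup>2\<close> gives
  \<open>\<parallel>w\<parallel>\<^sup>2 - \<parallel>\<pi> x w\<parallel>\<^sup>2 / t\<^sup>2 = \<parallel>\<pi> s w\<parallel>\<^sup>2 \<ge> 0\<close>.\<close>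
lemma norm_pi_le: "norm (\<pi> x w) \<le> norm x * norm w"
proof (rule le_mult_of_forall_gt)
  fix t
  assume "norm x < t"
  then have "t > 0" using norm_ge_zero[of x] by linarith
  define h where "h = (1 / t\<^sup>2) *\<^sub>R (st x * x)"
  have "st h = h"
    unfolding h_def by (simp add: st_scaleR st_mult)
  moreover have "norm h < 1"
    using \<open>norm x < t\<close> \<open>t > 0\<close> power_strict_mono[of "norm x" t 2]
    by (simp add: h_def norm_st_mult_self divide_simps)
  ultimately obtain s where "st s = s" and s_square: "s * s = 1 - h"
    using selfadjoint_sqrt_one_minus by blast
  then have "norm (\<pi> s w) ^ 2 = Re (hin w (\<pi> (1 - h) w))"
    using norm_power2_pi[of s w] by simp
  also have "\<dots> = norm w ^ 2 - (1 / t\<^sup>2) * norm (\<pi> x w) ^ 2"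
    by (simp add: h_def pi_diff pi_one pi_scaleR hin_diff_right hin_scaleR_right norm_power2_pi
        flip: norm_power2_eq_hin)
  finally have "(1 / t\<^sup>2) * norm (\<pi> x w) ^ 2 \<le> norm w ^ 2"
    using zero_le_power2[of "norm (\<pi> s w)"] by linarith
  then have "norm (\<pi> x w) ^ 2 \<le> (t * norm w) ^ 2"
    using \<open>t > 0\<close> by (simp add: divide_simps power_mult_distrib mult.commute)
  then show "norm (\<pi> x w) \<le> t * norm w"
    by (rule power2_le_imp_le) (use \<open>t > 0\<close> in simp)
qed simp

end

section \<open>The GNS representation of a trace\<close>

locale gns_trace = cstar_algebra scC st
  for scC :: "complex \<Rightarrow> 'a::{real_normed_algebra_1,banach} \<Rightarrow> 'a" and st :: "'a \<Rightarrow> 'a" +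
  fixes \<tau> :: "'a \<Rightarrow> complex" and hsc :: "complex \<Rightarrow> 'h::banach \<Rightarrow> 'h"
    and hin :: "'h \<Rightarrow> 'h \<Rightarrow> complex" and \<pi> :: "'a \<Rightarrow> 'h \<Rightarrow> 'h" and \<xi> :: 'h
  assumes gns_representation: "gns_representation scC st \<tau> hsc hin \<pi> \<xi>"
    and tracial_state: "tracial_state scC st \<tau>"

sublocale gns_trace \<subseteq> cstar_representation scC st hsc hin \<pi>
  using gns_representation unfolding gns_representation_def
  by unfold_locales blast+

context gns_trace
begin

lemma closure_range_pi_xi: "closure (range (\<lambda>a. \<pi> a \<xi>)) = UNIV"
  using gns_representation unfolding gns_representation_def by blast

lemma tau_eq_hin: "\<tau> a = hin \<xi> (\<pi> a \<xi>)"
  using gns_representation unfolding gns_representation_def by blast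

lemma tau_mult_commute: "\<tau> (x * y) = \<tau> (y * x)"
  using tracial_state unfolding tracial_state_def by blast

lemma tau_one: "\<tau> 1 = 1"
  using tracial_state unfolding tracial_state_def by blast

lemma tau_add: "\<tau> (x + y) = \<tau> x + \<tau> y"
  using tracial_state unfolding tracial_state_def by blast

lemma tau_diff: "\<tau> (x - y) = \<tau> x - \<tau> y"
  using tau_add[of "x - y" y] by (simp add: eq_diff_eq)

lemma norm_xi: "norm \<xi> = 1"
proof -
  have "norm \<xi> ^ 2 = 1"
    using norm_power2_eq_hin[of \<xi>] tau_one tau_eq_hin[of 1] by (simp add: pi_one)
  then show ?thesis
    using norm_ge_zero[of \<xi>] by (simp add: power2_eq_iff_nonneg[of _ 1, simplified])
qed

lemma norm_power2_pi_xi: "norm (\<pi> y \<xi>) ^ 2 = Re (\<tau> (st y * y))"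
  by (simp add: norm_power2_pi tau_eq_hin)

lemma norm_pi_xi_le: "norm (\<pi> y \<xi>) \<le> norm y"
  using norm_pi_le[of y \<xi>] by (simp add: norm_xi)

lemma norm_tau_le: "cmod (\<tau> y) \<le> norm (\<pi> y \<xi>)"
  using norm_hin_le[of \<xi> "\<pi> y \<xi>"] by (simp add: tau_eq_hin norm_xi)

lemma norm_pi_xi_st: "norm (\<pi> (st c) \<xi>) = norm (\<pi> c \<xi>)"
proof -
  have "norm (\<pi> (st c) \<xi>) ^ 2 = norm (\<pi> c \<xi>) ^ 2"
    by (simp add: norm_power2_pi_xi tau_mult_commute[of c])
  then show ?thesis by (simp add: power2_eq_iff_nonneg)
qed

text \<open>The trace makes right multiplication bounded on the cyclic subspace:
  \<open>\<tau>((cb)\<^sup>*cb) = \<tau>((b\<^sup>*c\<^sup>*)\<^sup>* b\<^sup>*c\<^sup>*)\<close>, so \<open>\<parallel>\<pi>(cb)\<xi>\<parallel> = \<parallel>\<pi>(b\<^sup>*)\<pi>(c\<^sup>*)\<xi>\<parallel>\<close>.\<close>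
lemma norm_pi_xi_mult_le: "norm (\<pi> (c * b) \<xi>) \<le> norm b * norm (\<pi> c \<xi>)"
proof -
  have "\<tau> (st (c * b) * (c * b)) = \<tau> ((st b * st c * c) * b)"
    by (simp add: st_mult mult.assoc)
  also have "\<dots> = \<tau> (c * (b * st b * st c))"
    by (metis tau_mult_commute mult.assoc)
  also have "\<dots> = \<tau> (st (st b * st c) * (st b * st c))"
    by (simp add: st_mult mult.assoc)
  finally have "norm (\<pi> (c * b) \<xi>) ^ 2 = norm (\<pi> (st b * st c) \<xi>) ^ 2"
    by (simp only: norm_power2_pi_xi)
  then have "norm (\<pi> (c * b) \<xi>) = norm (\<pi> (st b * st c) \<xi>)"
    by (simp add: power2_eq_iff_nonneg)
  also have "\<dots> = norm (\<pi> (st b) (\<pi> (st c) \<xi>))"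
    by (simp only: pi_mult)
  also have "\<dots> \<le> norm b * norm (\<pi> c \<xi>)"
    using norm_pi_le[of "st b" "\<pi> (st c) \<xi>"] by (simp add: norm_st norm_pi_xi_st)
  finally show ?thesis .
qed

lemma eq_on_cyclic_subspace:
  fixes F G :: "'h \<Rightarrow> 'h"
  assumes "continuous_on UNIV F" and "continuous_on UNIV G" and "\<And>a. F (\<pi> a \<xi>) = G (\<pi> a \<xi>)"
  shows "F u = G u"
  using closed_Collect_dense[OF closed_Collect_eq[OF assms(1,2)] closure_range_pi_xi] assms(3)
  by blast

lemma exists_continuous_right_mult: "\<exists>g. continuous_on UNIV g \<and> (\<forall>a. g (\<pi> a \<xi>) = \<pi> (a * b) \<xi>)"
proof -
  define X where "X = range (\<lambda>a. \<pi> a \<xi>)"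
  define g0 where "g0 u = \<pi> ((SOME a. \<pi> a \<xi> = u) * b) \<xi>" for u
  have g0_pi: "g0 (\<pi> a \<xi>) = \<pi> (a * b) \<xi>" for a
  proof -
    have "\<pi> (SOME a'. \<pi> a' \<xi> = \<pi> a \<xi>) \<xi> = \<pi> a \<xi>"
      by (rule someI) (rule refl)
    then have "norm (g0 (\<pi> a \<xi>) - \<pi> (a * b) \<xi>) = 0"
      using norm_pi_xi_mult_le[of "(SOME a'. \<pi> a' \<xi> = \<pi> a \<xi>) - a" b]
      by (simp add: g0_def left_diff_distrib pi_diff)
    then show ?thesis by simp
  qed
  have "(norm b)-lipschitz_on X g0"
  proof (rule lipschitz_onI)
    fix u v
    assume "u \<in> X" "v \<in> X"
    then obtain a a' where u: "u = \<pi> a \<xi>" and v: "v = \<pi> a' \<xi>"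
      unfolding X_def by blast
    have "dist (g0 u) (g0 v) = norm (\<pi> ((a - a') * b) \<xi>)"
      by (simp add: u v g0_pi dist_norm left_diff_distrib pi_diff)
    also have "\<dots> \<le> norm b * dist u v"
      using norm_pi_xi_mult_le[of "a - a'" b] by (simp add: u v dist_norm pi_diff)
    finally show "dist (g0 u) (g0 v) \<le> norm b * dist u v" .
  qed simp
  then obtain g where "uniformly_continuous_on (closure X) g" and "\<And>x. x \<in> X \<Longrightarrow> g0 x = g x"
    using uniformly_continuous_on_extension_on_closure lipschitz_on_uniformly_continuous by metis
  then show ?thesis
    using closure_range_pi_xi uniformly_continuous_imp_continuous g0_pi
    unfolding X_def by (metis rangeI)
qed

definition right_mult :: "'a \<Rightarrow> 'h \<Rightarrow> 'h" where
  "right_mult b = (SOME g. continuous_on UNIV g \<and> (\<forall>a. g (\<pi> a \<xi>) = \<pi> (a * b) \<xi>))"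

lemma continuous_right_mult: "continuous_on UNIV (right_mult b)"
  and right_mult_pi_xi: "right_mult b (\<pi> a \<xi>) = \<pi> (a * b) \<xi>"
  using someI_ex[OF exists_continuous_right_mult[of b]] unfolding right_mult_def by blast+

lemma continuous_on_right_mult [continuous_intros]:
  "continuous_on S g \<Longrightarrow> continuous_on S (\<lambda>x. right_mult b (g x))"
  by (rule continuous_on_compose2[OF continuous_right_mult]) auto

lemma right_mult_xi: "right_mult b \<xi> = \<pi> b \<xi>"
  using right_mult_pi_xi[of b 1] by (simp add: pi_one)

lemma right_mult_add: "right_mult b (u + v) = right_mult b u + right_mult b v"
proof -
  define X where "X = range (\<lambda>a. \<pi> a \<xi>) \<times> range (\<lambda>a. \<pi> a \<xi>)"
  have closed: "closed {p. right_mult b (fst p + snd p) = right_mult b (fst p) + right_mult b (snd p)}"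
    by (intro closed_Collect_eq continuous_intros)
  have dense: "closure X = UNIV"
    by (simp add: X_def closure_Times closure_range_pi_xi)
  have "right_mult b (fst p + snd p) = right_mult b (fst p) + right_mult b (snd p)"
    if "p \<in> X" for p
    using that by (auto simp: X_def right_mult_pi_xi distrib_right simp flip: pi_add)
  from closed_Collect_dense[OF closed dense this, of "(u, v)"] show ?thesis
    by simp
qed

lemma right_mult_hsc: "right_mult b (hsc c u) = hsc c (right_mult b u)"
proof (rule eq_on_cyclic_subspace[where F = "\<lambda>u. right_mult b (hsc c u)"])
  note hsc = bounded_clinear_op_bounded_linear[OF bounded_clinear_op_hsc]
  show "continuous_on UNIV (\<lambda>u. right_mult b (hsc c u))"
    and "continuous_on UNIV (\<lambda>u. hsc c (right_mult b u))"
    by (intro continuous_intros bounded_linear.continuous_on[OF hsc])+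
qed (simp flip: pi_scC add: right_mult_pi_xi scC_mult_left)

lemma right_mult_pi: "right_mult b (\<pi> c u) = \<pi> c (right_mult b u)"
proof (rule eq_on_cyclic_subspace[where F = "\<lambda>u. right_mult b (\<pi> c u)"])
  show "continuous_on UNIV (\<lambda>u. right_mult b (\<pi> c u))"
    and "continuous_on UNIV (\<lambda>u. \<pi> c (right_mult b u))"
    by (intro continuous_intros bounded_linear.continuous_on[OF bounded_linear_pi])+
qed (simp flip: pi_mult add: right_mult_pi_xi mult.assoc)

lemma norm_right_mult_le: "norm (right_mult b u) \<le> norm b * norm u"
proof (rule closed_Collect_dense[OF _ closure_range_pi_xi])
  show "closed {u. norm (right_mult b u) \<le> norm b * norm u}"
    by (intro closed_Collect_le continuous_intros)
qed (auto simp: right_mult_pi_xi norm_pi_xi_mult_le)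

lemma right_mult_commutant: "right_mult b \<in> commutant hsc (range \<pi>)"
  unfolding commutant_def bounded_clinear_op_def
  using right_mult_add right_mult_hsc norm_right_mult_le right_mult_pi
  by (auto simp: fun_eq_iff intro!: exI[where x = "norm b"])

lemma bounded_linear_right_mult: "bounded_linear (right_mult b)"
  using right_mult_commutant bounded_clinear_op_bounded_linear
  unfolding commutant_def by blast

text \<open>Centrality of \<open>f\<^sub>n\<close> is only known on the dense set \<open>\<pi>(A)\<xi>\<close>, where
  \<open>\<pi>(f\<^sub>n)\<pi>(a)\<xi> - \<pi>(a)\<pi>(f\<^sub>n)\<xi> = \<pi>(f\<^sub>n a - a f\<^sub>n)\<xi>\<close>.\<close>
lemma central_sequence_right_mult:
  assumes bounded: "\<And>n. norm (f n) \<le> 1"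
    and central: "\<And>a. (\<lambda>n. norm (f n * a - a * f n)) \<longlonglongrightarrow> 0"
  shows "(\<lambda>n. \<pi> (f n) u - right_mult (f n) u) \<longlonglongrightarrow> 0"
proof (rule tendsto_zero_on_dense[OF _ _ closure_range_pi_xi])
  show "linear (\<lambda>u. \<pi> (f n) u - right_mult (f n) u)" for n
    by (intro bounded_linear.linear bounded_linear_sub bounded_linear_pi bounded_linear_right_mult)
  show "norm (\<pi> (f n) z - right_mult (f n) z) \<le> 2 * norm z" for n z
    using norm_triangle_ineq4[of "\<pi> (f n) z" "right_mult (f n) z"]
      norm_pi_le[of "f n" z] norm_right_mult_le[of "f n" z]
      mult_right_mono[OF bounded[of n] norm_ge_zero[of z]]
    by linarith
  fix x
  assume "x \<in> range (\<lambda>a. \<pi> a \<xi>)"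
  then obtain a where x: "x = \<pi> a \<xi>" by blast
  have "norm (\<pi> (f n) x - right_mult (f n) x) \<le> norm (f n * a - a * f n)" for n
    using norm_pi_xi_le[of "f n * a - a * f n"]
    by (simp add: x right_mult_pi_xi pi_diff pi_mult)
  then show "(\<lambda>n. \<pi> (f n) x - right_mult (f n) x) \<longlonglongrightarrow> 0"
    by (intro Lim_null_comparison[OF always_eventually central[of a]]) simp
qed

section \<open>Weakly inner automorphisms\<close>

lemma WInn_central_sequence_pi_xi_diff:
  assumes "\<alpha> \<in> WInn scC st hsc hin \<pi>"
    and bounded: "\<And>n. norm (f n) \<le> 1"
    and central: "\<And>a. (\<lambda>n. norm (f n * a - a * f n)) \<longlonglongrightarrow> 0"
  shows "(\<lambda>n. \<pi> (f n) \<xi> - \<pi> (\<alpha> (f n)) \<xi>) \<longlonglongrightarrow> 0"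
proof -
  obtain V where unitary: "unitary_op hsc hin V"
    and bicommutant: "V \<in> commutant hsc (commutant hsc (range \<pi>))"
    and implements: "\<And>a. \<pi> (\<alpha> a) = V \<circ> \<pi> a \<circ> inv V"
    using assms(1) unfolding WInn_def by blast
  define \<eta> where "\<eta> = inv V \<xi>"
  have "V \<eta> = \<xi>"
    using unitary by (simp add: \<eta>_def unitary_op_def surj_f_inv_f)
  have "V \<circ> right_mult b = right_mult b \<circ> V" for b
    using bicommutant right_mult_commutant unfolding commutant_def by blast
  then have u: "\<pi> (f n) \<xi> = V (right_mult (f n) \<eta>)" for n
    by (metis \<open>V \<eta> = \<xi>\<close> comp_apply right_mult_xi)
  have v: "\<pi> (\<alpha> (f n)) \<xi> = V (\<pi> (f n) \<eta>)" for n
    by (simp add: implements \<eta>_def)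
  have "linear V"
    using unitary bounded_clinear_op_bounded_linear bounded_linear.linear
    unfolding unitary_op_def by blast
  then have "norm (\<pi> (f n) \<xi> - \<pi> (\<alpha> (f n)) \<xi>) = norm (\<pi> (f n) \<eta> - right_mult (f n) \<eta>)" for n
    by (simp add: u v unitary_op_norm[OF unitary] norm_minus_commute flip: linear_diff)
  then have "(\<lambda>n. norm (\<pi> (f n) \<xi> - \<pi> (\<alpha> (f n)) \<xi>)) \<longlonglongrightarrow> 0"
    using tendsto_norm_zero[OF central_sequence_right_mult[OF bounded central, of \<eta>]] by simp
  then show ?thesis
    by (rule tendsto_norm_zero_cancel)
qed

lemma WInn_central_sequence_tau_tendsto_zero:
  assumes "\<alpha> \<in> WInn scC st hsc hin \<pi>"
    and selfadjoint: "\<And>n. st (f n) = f n" and bounded: "\<And>n. norm (f n) \<le> 1"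
    and central: "\<And>a. (\<lambda>n. norm (f n * a - a * f n)) \<longlonglongrightarrow> 0"
    and orthogonal: "(\<lambda>n. norm (\<alpha> (f n) * f n)) \<longlonglongrightarrow> 0"
  shows "(\<lambda>n. \<tau> (f n)) \<longlonglongrightarrow> 0" and "(\<lambda>n. \<tau> (\<alpha> (f n))) \<longlonglongrightarrow> 0"
proof -
  have star: "\<alpha> (st x) = st (\<alpha> x)" for x
    using assms(1) unfolding WInn_def star_automorphism_def by blast
  have "hin (\<pi> (\<alpha> (f n)) \<xi>) (\<pi> (f n) \<xi>) = \<tau> (\<alpha> (f n) * f n)" for n
  proof -
    have "hin (\<pi> (\<alpha> (f n)) \<xi>) (\<pi> (f n) \<xi>) = hin (\<pi> (st (\<alpha> (f n))) \<xi>) (\<pi> (f n) \<xi>)"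
      by (simp flip: star add: selfadjoint)
    also have "\<dots> = \<tau> (\<alpha> (f n) * f n)"
      by (simp add: pi_adjoint tau_eq_hin pi_mult)
    finally show ?thesis .
  qed
  then have "cmod (hin (\<pi> (\<alpha> (f n)) \<xi>) (\<pi> (f n) \<xi>)) \<le> norm (\<alpha> (f n) * f n)" for n
    using norm_tau_le[of "\<alpha> (f n) * f n"] norm_pi_xi_le[of "\<alpha> (f n) * f n"] by simp
  then have orthogonal_vectors: "(\<lambda>n. hin (\<pi> (\<alpha> (f n)) \<xi>) (\<pi> (f n) \<xi>)) \<longlonglongrightarrow> 0"
    by (intro Lim_null_comparison[OF always_eventually orthogonal]) simp
  have "norm (\<pi> (f n) \<xi>) \<le> 1" for n
    using norm_pi_xi_le[of "f n"] bounded[of n] by linarith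
  note vectors_tendsto_zero = tendsto_zero_of_asymptotically_orthogonal[OF this
      WInn_central_sequence_pi_xi_diff[OF assms(1) bounded central] orthogonal_vectors]
  show "(\<lambda>n. \<tau> (f n)) \<longlonglongrightarrow> 0"
    by (rule Lim_null_comparison[OF always_eventually tendsto_norm_zero[OF vectors_tendsto_zero(1)]]) (simp add: norm_tau_le)
  show "(\<lambda>n. \<tau> (\<alpha> (f n))) \<longlonglongrightarrow> 0"
    by (rule Lim_null_comparison[OF always_eventually tendsto_norm_zero[OF vectors_tendsto_zero(2)]]) (simp add: norm_tau_le)
qed

end

theorem proposition5p5:
  fixes scC :: "complex \<Rightarrow> 'a::{real_normed_algebra_1,banach} \<Rightarrow> 'a"
    and st :: "'a \<Rightarrow> 'a"
    and \<tau> :: "'a \<Rightarrow> complex"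
    and \<alpha> :: "'a \<Rightarrow> 'a"
    and f :: "nat \<Rightarrow> 'a"
    and hsc :: "complex \<Rightarrow> 'h::banach \<Rightarrow> 'h"
    and hin :: "'h \<Rightarrow> 'h \<Rightarrow> complex"
    and \<pi> :: "'a \<Rightarrow> 'h \<Rightarrow> 'h"
    and \<xi> :: 'h
  assumes "unital_cstar_algebra scC st"
    and "simple_algebra scC"
    and "projectionless st"
    and "unique_tracial_state scC st \<tau>"
    and "star_automorphism scC st \<alpha>"
    and "\<forall>n. positive_el scC st (f n) \<and> norm (f n) \<le> 1"
    and "\<forall>a. (\<lambda>n. norm (f n * a - a * f n)) \<longlonglongrightarrow> 0"
    and "(\<lambda>n. norm (\<alpha> (f n) * f n)) \<longlonglongrightarrow> 0"
    and "(\<lambda>n. \<tau> (1 - (f n + \<alpha> (f n)))) \<longlonglongrightarrow> 0"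
    and "gns_representation scC st \<tau> hsc hin \<pi> \<xi>"
  shows "\<alpha> \<notin> WInn scC st hsc hin \<pi>"
proof
  assume "\<alpha> \<in> WInn scC st hsc hin \<pi>"
  interpret gns_trace scC st \<tau> hsc hin \<pi> \<xi>
    using assms(1,4,10) by unfold_locales (simp_all add: unique_tracial_state_def)
  have "(\<lambda>n. \<tau> (f n)) \<longlonglongrightarrow> 0" and "(\<lambda>n. \<tau> (\<alpha> (f n))) \<longlonglongrightarrow> 0"
    using WInn_central_sequence_tau_tendsto_zero[OF \<open>\<alpha> \<in> WInn scC st hsc hin \<pi>\<close>] assms(6-8)
    unfolding positive_el_def by blast+
  then have "(\<lambda>n. 1 - (\<tau> (f n) + \<tau> (\<alpha> (f n)))) \<longlonglongrightarrow> 1 - (0 + 0)"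
    by (intro tendsto_intros)
  then have "(\<lambda>n. \<tau> (1 - (f n + \<alpha> (f n)))) \<longlonglongrightarrow> 1"
    by (simp add: tau_diff tau_add tau_one)
  with assms(9) show False
    using LIMSEQ_unique by fastforce
qed

end
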